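(* Let $a\ge k\ge1$ be integers. For each $\lambda\in\mathrm{SPar}_{a,k}$ let $g_\lambda\in\mathbb Z[y_{k+1},\dots,y_a]$ be any polynomial of the form $$g_\lambda=e_{\bar\lambda-\rho_k}(y_{k+1},\dots,y_a)+\sum_{\nu}d_{\lambda,\nu}\,e_\nu(y_{k+1},\dots,y_a),$$ a finite sum over partitions $\nu$ with $|\nu|=|\bar\lambda-\rho_k|$ and $\nu\triangleright\bar\lambda-\rho_k$, with $d_{\lambda,\nu}\in\mathbb Z$. Then the family $\big(g_\lambda\cdot e_\mu(y_1,\dots,y_a)\big)_{(\lambda,\mu)\in\mathrm{SPar}_{a,k}\times\mathrm{Par}_a}$ is linearly independent over $\mathbb Z$ in $\mathbb Z[y_1,\dots,y_a]$.
   Context: $\mathrm{Par}_a$ is the set of partitions with all parts $\le a$ (including the empty partition); $\mathrm{SPar}_{a,k}$ is the set of strict partitions (pairwise distinct parts) with exactly $k$ parts, all in $\{1,\dots,a\}$. For $\lambda=(\lambda_1>\dots>\lambda_k)\in\mathrm{SPar}_{a,k}$, $\bar\lambda=(\lambda_1-1,\dots,\lambda_k-1)$, $\rho_k=(k-1,k-2,\dots,1,0)$, so $\bar\lambda-\rho_k=(\lambda_1-k,\lambda_2-k+1,\dots,\lambda_k-1)$ is a partition (possibly with zero parts). $e_r$ denotes the $r$-th elementary symmetric polynomial in the indicated variables ($e_0=1$, $e_r=0$ if $r<0$ or $r$ exceeds the number of variables), and for a sequence $\nu=(\nu_1,\nu_2,\dots)$, $e_\nu=\prod_i e_{\nu_i}$.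 $\triangleright$ is strict dominance: $\rho\triangleright\sigma$ iff $\rho\neq\sigma$ and $\rho_1+\dots+\rho_i\ge\sigma_1+\dots+\sigma_i$ for all $i$ (partitions of equal size, zero parts ignored). *)

theory Defs
  imports Main "HOL-Library.Poly_Mapping"
begin

(* Multivariate integer polynomials in variables y_i (i :: nat):
  finitely supported maps from monomials (exponent vectors nat =>0 nat) to coefficients. *)
type_synonym mpoly_int = "(nat \<Rightarrow>\<^sub>0 nat) \<Rightarrow>\<^sub>0 int"

definition Var :: "nat \<Rightarrow> mpoly_int" where
  "Var i = Poly_Mapping.single (Poly_Mapping.single i 1) 1"

definition esym :: "nat set \<Rightarrow> nat \<Rightarrow> mpoly_int" where
  "esym V r = (\<Sum>T\<in>{T. T \<subseteq> V \<and> card T = r}. \<Prod>i\<in>T. Var i)"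

definition esym_seq :: "nat set \<Rightarrow> nat list \<Rightarrow> mpoly_int" where
  "esym_seq V \<nu> = prod_list (map (esym V) \<nu>)"

definition is_partition :: "nat list \<Rightarrow> bool" where
  "is_partition p \<longleftrightarrow> sorted_wrt (\<ge>) p \<and> (\<forall>x\<in>set p. 0 < x)"

definition Par :: "nat \<Rightarrow> nat list set" where
  "Par a = {p. is_partition p \<and> (\<forall>x\<in>set p. x \<le> a)}"

definition SPar :: "nat \<Rightarrow> nat \<Rightarrow> nat list set" where
  "SPar a k = {p. sorted_wrt (>) p \<and> length p = k \<and> (\<forall>x\<in>set p. 1 \<le> x \<and> x \<le> a)}"

(* \<bar>\<lambda> - \<rho>_k = (\<lambda>_1 - k, \<lambda>_2 - k + 1, ..., \<lambda>_k - 1) (0-indexed: \<lambda>_i - (k - i)). *)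
definition shifted :: "nat list \<Rightarrow> nat list" where
  "shifted lam = map (\<lambda>i. lam ! i - (length lam - i)) [0..<length lam]"

definition nonzero_parts :: "nat list \<Rightarrow> nat list" where
  "nonzero_parts p = filter (\<lambda>x. x \<noteq> 0) p"

definition strictly_dominates :: "nat list \<Rightarrow> nat list \<Rightarrow> bool" where
  "strictly_dominates r s \<longleftrightarrow>
     nonzero_parts r \<noteq> nonzero_parts s \<and> sum_list r = sum_list s \<and>
     (\<forall>i. sum_list (take i (nonzero_parts r)) \<ge> sum_list (take i (nonzero_parts s)))"

end

(*
  Put X = {y_1, ..., y_k} and Z = {y_(k+1), ..., y_a}. The heart of the proof is that the
  products e_sigma(Z) * e_mu(X u Z), with sigma in the k x (a - k) box and mu in Par_a, are
  linearly independent; this is proved by induction on |X| + |Z|.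
  First, the coefficients of all terms in which mu has no part |X| + |Z| vanish: substituting 0
  for some z in Z kills the terms whose sigma has the part |Z| or whose mu has the part
  |X| + |Z|, and leaves a relation over (X, Z - {z}). The remaining terms are divisible by
  e_|Z|(Z) = prod Z; after cancelling it, substituting 0 for some x in X kills the terms
  carrying the factor e_|X|(X) and leaves, once the part |Z| is removed from sigma, a relation
  over (X - {x}, Z). Now every term has the factor e_(|X|+|Z|)(X u Z), and cancelling it
  shortens mu, so an inner induction on the length of mu finishes the argument.

  Each g_lambda expands in the e_tau(Z) with leading term tau = bar(lambda) - rho_k (zero parts
  dropped), and all other terms strictly dominate it. Since lambda |-> tau is injective and the
  sum of the prefix sums strictly increases under strict dominance, the coefficient matrix is
  unitriangular, and independence of the g_lambda * e_mu follows from that of the box family.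
*)

theory Submission
  imports Defs
begin

section \<open>Setting a variable to zero\<close>

definition subst_zero :: "nat \<Rightarrow> mpoly_int \<Rightarrow> mpoly_int" where
  "subst_zero v = Poly_Mapping.mapp (\<lambda>m c. if Poly_Mapping.lookup m v = 0 then c else 0)"

lemma lookup_subst_zero:
  "Poly_Mapping.lookup (subst_zero v p) m =
     (if Poly_Mapping.lookup m v = 0 then Poly_Mapping.lookup p m else 0)"
  by (simp add: subst_zero_def lookup_mapp when_def in_keys_iff)

lemma subst_zero_0 [simp]: "subst_zero v 0 = 0"
  by (rule poly_mapping_eqI) (simp add: lookup_subst_zero)

lemma subst_zero_add: "subst_zero v (p + q) = subst_zero v p + subst_zero v q"
  by (rule poly_mapping_eqI) (simp add: lookup_subst_zero lookup_add)

lemma subst_zero_sum: "subst_zero v (sum f A) = (\<Sum>x\<in>A. subst_zero v (f x))"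
  by (induction A rule: infinite_finite_induct) (simp_all add: subst_zero_add)

lemma subst_zero_single:
  "subst_zero v (Poly_Mapping.single m c) =
     (if Poly_Mapping.lookup m v = 0 then Poly_Mapping.single m c else 0)"
  by (rule poly_mapping_eqI) (auto simp: lookup_subst_zero lookup_single when_def)

lemma sum_single_lookup:
  "(\<Sum>m\<in>Poly_Mapping.keys p. Poly_Mapping.single m (Poly_Mapping.lookup p m)) = p"
proof (rule poly_mapping_eqI)
  fix m
  show "Poly_Mapping.lookup (\<Sum>n\<in>Poly_Mapping.keys p. Poly_Mapping.single n (Poly_Mapping.lookup p n)) m =
      Poly_Mapping.lookup p m"
    by (cases "m \<in> Poly_Mapping.keys p") (simp_all add: lookup_sum lookup_single when_def in_keys_iff)
qed

lemma subst_zero_mult: "subst_zero v (p * q) = subst_zero v p * subst_zero v q"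
proof -
  let ?P = "Poly_Mapping.keys p" and ?Q = "Poly_Mapping.keys q"
  let ?mon = "\<lambda>p m. Poly_Mapping.single m (Poly_Mapping.lookup p m)"
  have pq: "p * q = (\<Sum>m\<in>?P. \<Sum>n\<in>?Q. ?mon p m * ?mon q n)"
    by (subst (1 2) sum_single_lookup[symmetric]) (simp add: sum_product)
  have p: "subst_zero v p = (\<Sum>m\<in>?P. subst_zero v (?mon p m))"
    by (subst sum_single_lookup[symmetric, of p]) (simp add: subst_zero_sum)
  have q: "subst_zero v q = (\<Sum>n\<in>?Q. subst_zero v (?mon q n))"
    by (subst sum_single_lookup[symmetric, of q]) (simp add: subst_zero_sum)
  show ?thesis
    unfolding pq p q sum_product subst_zero_sum
    by (intro sum.cong refl) (auto simp: mult_single subst_zero_single lookup_add)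
qed

lemma subst_zero_of_int [simp]: "subst_zero v (of_int c) = of_int c"
  by (metis single_of_int subst_zero_single lookup_zero)

lemma subst_zero_1 [simp]: "subst_zero v 1 = 1"
  using subst_zero_of_int[of v 1] by simp

lemma subst_zero_prod: "subst_zero v (prod f A) = (\<Prod>x\<in>A. subst_zero v (f x))"
  by (induction A rule: infinite_finite_induct) (auto simp: subst_zero_mult)

lemma subst_zero_Var: "subst_zero v (Var i) = (if i = v then 0 else Var i)"
  by (simp add: Var_def subst_zero_single lookup_single)

section \<open>Elementary symmetric polynomials\<close>

lemma esym_seq_Nil [simp]: "esym_seq V [] = 1"
  by (simp add: esym_seq_def)

lemma esym_seq_Cons [simp]: "esym_seq V (r # p) = esym V r * esym_seq V p"
  by (simp add: esym_seq_def)

lemma subst_zero_esym: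
  assumes "finite V"
  shows "subst_zero v (esym V r) = esym (V - {v}) r"
proof -
  have "subst_zero v (\<Prod>i\<in>T. Var i) = (if v \<in> T then 0 else \<Prod>i\<in>T. Var i)"
    if "T \<subseteq> V" for T
    using finite_subset[OF that assms] by (auto simp: subst_zero_prod subst_zero_Var intro: prod.cong)
  then have "subst_zero v (esym V r) =
      (\<Sum>T\<in>{T. T \<subseteq> V \<and> card T = r}. if v \<in> T then 0 else \<Prod>i\<in>T. Var i)"
    by (simp add: esym_def subst_zero_sum)
  also have "\<dots> = esym (V - {v}) r"
    unfolding esym_def by (rule sum.mono_neutral_cong_right) (use assms in auto)
  finally show ?thesis .
qed

lemma subst_zero_esym_seq:
  "finite V \<Longrightarrow> subst_zero v (esym_seq V p) = esym_seq (V - {v}) p"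
  by (induction p) (simp_all add: subst_zero_mult subst_zero_esym)

lemma esym_eq_0:
  assumes "finite V" "card V < r"
  shows "esym V r = 0"
proof -
  have "card T \<le> card V" if "T \<subseteq> V" for T
    using card_mono[OF assms(1) that] .
  then have no_subsets: "{T. T \<subseteq> V \<and> card T = r} = {}"
    using assms(2) by (auto dest: leD)
  show ?thesis
    unfolding esym_def no_subsets by simp
qed

lemma esym_seq_eq_0: "finite V \<Longrightarrow> r \<in> set p \<Longrightarrow> card V < r \<Longrightarrow> esym_seq V p = 0"
  by (induction p) (auto simp: esym_eq_0)

lemma esym_0:
  assumes "finite V"
  shows "esym V 0 = 1"
proof -
  have "{T. T \<subseteq> V \<and> card T = 0} = {{}}"
    using assms by (auto dest: finite_subset)
  then show ?thesis
    by (simp add: esym_def)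
qed

lemma esym_card:
  assumes "finite V"
  shows "esym V (card V) = (\<Prod>i\<in>V. Var i)"
proof -
  have "{T. T \<subseteq> V \<and> card T = card V} = {V}"
    using assms card_subset_eq by auto
  then show ?thesis
    by (simp add: esym_def)
qed

lemma esym_card_neq_0: "finite V \<Longrightarrow> esym V (card V) \<noteq> 0"
  by (simp add: esym_card Var_def)

lemma esym_card_Un:
  assumes "finite X" "finite Z" "X \<inter> Z = {}"
  shows "esym (X \<union> Z) (card X + card Z) = esym X (card X) * esym Z (card Z)"
proof -
  have "card (X \<union> Z) = card X + card Z"
    using assms card_Un_disjoint by blast
  then show ?thesis
    using assms by (metis esym_card finite_UnI prod.union_disjoint)
qed

lemma esym_seq_nonzero_parts: "finite V \<Longrightarrow> esym_seq V (nonzero_parts p) = esym_seq V p"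
  unfolding nonzero_parts_def by (induction p) (auto simp: esym_0)

section \<open>Partitions in a box\<close>

definition Box :: "nat \<Rightarrow> nat \<Rightarrow> nat list set" where
  "Box k m = {p. is_partition p \<and> length p \<le> k \<and> (\<forall>x\<in>set p. x \<le> m)}"

lemma is_partition_Cons:
  "is_partition (x # xs) \<longleftrightarrow> (\<forall>y\<in>set xs. y \<le> x) \<and> 0 < x \<and> is_partition xs"
  by (auto simp: is_partition_def)

lemma Nil_in_Box [simp]: "[] \<in> Box k m"
  by (simp add: Box_def is_partition_def)

lemma positive_parts_le_0: "\<forall>x\<in>set p. 0 < x \<and> x \<le> (0::nat) \<Longrightarrow> p = []"
  by (cases p) auto

lemma Box_degenerate: "k = 0 \<or> m = 0 \<Longrightarrow> Box k m = {[]}"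
  by (auto simp: Box_def is_partition_def intro: positive_parts_le_0)

lemma Par_0: "Par 0 = {[]}"
  by (auto simp: Par_def is_partition_def intro: positive_parts_le_0)

lemma finite_Box: "finite (Box k m)"
proof (rule finite_subset)
  show "Box k m \<subseteq> {xs. set xs \<subseteq> {0..m} \<and> length xs \<le> k}"
    by (auto simp: Box_def)
qed (rule finite_lists_length_le, simp)

lemma is_partition_hd_eq_bound:
  assumes "is_partition p" "\<forall>x\<in>set p. x \<le> a" "\<exists>x\<in>set p. a - 1 < x"
  shows "p = a # tl p \<and> is_partition (tl p)"
proof -
  obtain y where y: "y \<in> set p" "a - 1 < y"
    using assms(3) by blast
  obtain x xs where p: "p = x # xs"
    using y(1) by (cases p) auto
  have "y \<le> x" "x \<le> a" "y \<le> a"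
    using y(1) assms(1,2) p by (auto simp: is_partition_Cons)
  then show ?thesis
    using y(2) p assms(1) by (auto simp: is_partition_Cons)
qed

lemma Par_top:
  assumes "\<mu> \<in> Par a" "\<mu> \<notin> Par (a - 1)"
  shows "\<mu> = a # tl \<mu> \<and> tl \<mu> \<in> Par a"
  using is_partition_hd_eq_bound[of \<mu> a] assms
  by (cases \<mu>) (auto simp: Par_def is_partition_Cons)

lemma Box_top:
  assumes "\<sigma> \<in> Box k m" "\<sigma> \<notin> Box k (m - 1)"
  shows "\<sigma> = m # tl \<sigma> \<and> tl \<sigma> \<in> Box (k - 1) m"
  using is_partition_hd_eq_bound[of \<sigma> m] assms
  by (cases \<sigma>) (auto simp: Box_def is_partition_Cons)

lemma esym_seq_Par_top:
  assumes "\<mu> \<in> Par a" "\<mu> \<notin> Par (a - 1)"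
  shows "esym_seq V \<mu> = esym V a * esym_seq V (tl \<mu>)"
  using Par_top[OF assms] by (metis esym_seq_Cons)

lemma esym_seq_Box_top:
  assumes "\<sigma> \<in> Box k m" "\<sigma> \<notin> Box k (m - 1)"
  shows "esym_seq V \<sigma> = esym V m * esym_seq V (tl \<sigma>)"
  using Box_top[OF assms] by (metis esym_seq_Cons)

lemma esym_seq_Par_top_eq_0:
  "\<mu> \<in> Par a \<Longrightarrow> \<mu> \<notin> Par (a - 1) \<Longrightarrow> finite V \<Longrightarrow> card V < a \<Longrightarrow> esym_seq V \<mu> = 0"
  by (simp add: esym_seq_Par_top esym_eq_0)

lemma esym_seq_Box_top_eq_0:
  "\<sigma> \<in> Box k m \<Longrightarrow> \<sigma> \<notin> Box k (m - 1) \<Longrightarrow> finite V \<Longrightarrow> card V < m \<Longrightarrow> esym_seq V \<sigma> = 0"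
  by (simp add: esym_seq_Box_top esym_eq_0)

lemma card_Diff_singleton_disjoint_Un:
  assumes "finite X" "finite Z" "X \<inter> Z = {}" "v \<in> X \<union> Z"
  shows "card (X - {v}) + card (Z - {v}) = card X + card Z - 1"
    and "card (X - {v} \<union> (Z - {v})) = card X + card Z - 1"
    and "card X + card Z - 1 < card X + card Z"
proof -
  show *: "card (X - {v}) + card (Z - {v}) = card X + card Z - 1"
  proof (cases "v \<in> X")
    case True
    then have "v \<notin> Z" "0 < card X"
      using assms card_gt_0_iff by auto
    then show ?thesis
      using True assms by simp
  next
    case False
    then have "v \<in> Z" "0 < card Z"
      using assms card_gt_0_iff by auto
    then show ?thesis
      using False assms by simp
  qed
  show "card (X - {v} \<union> (Z - {v})) = card X + card Z - 1"
    using assms * by (subst card_Un_disjoint) auto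
  show "card X + card Z - 1 < card X + card Z"
    using assms card_gt_0_iff[of X] card_gt_0_iff[of Z] by auto
qed

section \<open>Independence of the box family\<close>

definition box_relation ::
  "nat set \<Rightarrow> nat set \<Rightarrow> (nat list \<times> nat list) set \<Rightarrow> (nat list \<Rightarrow> nat list \<Rightarrow> int) \<Rightarrow> bool" where
  "box_relation X Z S c \<longleftrightarrow>
     finite S \<and> S \<subseteq> Box (card X) (card Z) \<times> Par (card X + card Z) \<and>
     (\<Sum>(\<sigma>, \<mu>)\<in>S. of_int (c \<sigma> \<mu>) * (esym_seq Z \<sigma> * esym_seq (X \<union> Z) \<mu>)) = 0"

definition box_independent :: "nat set \<Rightarrow> nat set \<Rightarrow> bool" where
  "box_independent X Z \<longleftrightarrow> (\<forall>S c. box_relation X Z S c \<longrightarrow> (\<forall>(\<sigma>, \<mu>)\<in>S. c \<sigma> \<mu> = 0))"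

lemma box_independentD:
  "box_independent X Z \<Longrightarrow> box_relation X Z S c \<Longrightarrow> (\<sigma>, \<mu>) \<in> S \<Longrightarrow> c \<sigma> \<mu> = 0"
  by (fastforce simp: box_independent_def)

lemma sum_pairs_restrict:
  assumes "finite S" "\<And>\<sigma> \<mu>. (\<sigma>, \<mu>) \<in> S \<Longrightarrow> (\<sigma>, \<mu>) \<notin> T \<Longrightarrow> f \<sigma> \<mu> = 0"
  shows "(\<Sum>(\<sigma>, \<mu>)\<in>S. f \<sigma> \<mu>) = (\<Sum>(\<sigma>, \<mu>)\<in>S \<inter> T. f \<sigma> \<mu>)"
  by (rule sum.mono_neutral_right) (use assms in auto)

lemma sum_vimage_inj:
  assumes "inj h" "S \<subseteq> range h"
  shows "(\<Sum>x\<in>h -` S. g (h x)) = sum g S"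
  by (rule sum.reindex_bij_betw) (use assms in \<open>auto simp: bij_betw_def inj_on_def\<close>)

lemma box_relation_drop_var:
  assumes rel: "box_relation X Z S c" and fin: "finite X" "finite Z" and disj: "X \<inter> Z = {}"
    and v: "v \<in> X \<union> Z"
    and vanish: "\<And>\<sigma> \<mu>. (\<sigma>, \<mu>) \<in> S \<Longrightarrow> \<sigma> \<notin> Box (card (X - {v})) (card (Z - {v})) \<Longrightarrow>
                   esym_seq (Z - {v}) \<sigma> = 0"
  shows "box_relation (X - {v}) (Z - {v})
           (S \<inter> (Box (card (X - {v})) (card (Z - {v})) \<times> Par (card X + card Z - 1))) c"
proof -
  let ?X = "X - {v}" and ?Z = "Z - {v}" and ?a = "card X + card Z"
  let ?term = "\<lambda>(\<sigma>, \<mu>). of_int (c \<sigma> \<mu>) * (esym_seq ?Z \<sigma> * esym_seq (?X \<union> ?Z) \<mu>)"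
  note card_drop = card_Diff_singleton_disjoint_Un[OF fin disj v]
  have fS: "finite S" and sub: "S \<subseteq> Box (card X) (card Z) \<times> Par ?a"
    and sum0: "(\<Sum>(\<sigma>, \<mu>)\<in>S. of_int (c \<sigma> \<mu>) * (esym_seq Z \<sigma> * esym_seq (X \<union> Z) \<mu>)) = 0"
    using rel by (auto simp: box_relation_def)
  have "sum ?term S = 0"
    using arg_cong[OF sum0, of "subst_zero v"] fin
    by (simp add: subst_zero_sum subst_zero_mult subst_zero_esym_seq case_prod_beta Un_Diff)
  moreover have "sum ?term S = sum ?term (S \<inter> (Box (card ?X) (card ?Z) \<times> Par (?a - 1)))"
  proof (rule sum_pairs_restrict[OF fS])
    fix \<sigma> \<mu> assume p: "(\<sigma>, \<mu>) \<in> S" "(\<sigma>, \<mu>) \<notin> Box (card ?X) (card ?Z) \<times> Par (?a - 1)"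
    show "of_int (c \<sigma> \<mu>) * (esym_seq ?Z \<sigma> * esym_seq (?X \<union> ?Z) \<mu>) = 0"
    proof (cases "\<sigma> \<in> Box (card ?X) (card ?Z)")
      case True
      then have "\<mu> \<in> Par ?a" "\<mu> \<notin> Par (?a - 1)"
        using p sub by auto
      then have "esym_seq (?X \<union> ?Z) \<mu> = 0"
        by (rule esym_seq_Par_top_eq_0) (use fin card_drop in auto)
      then show ?thesis
        by simp
    next
      case False
      then show ?thesis
        using vanish p by simp
    qed
  qed
  ultimately show ?thesis
    using fS sub card_drop unfolding box_relation_def by auto
qed

text \<open>Every term not covered by \<open>low\<close> is divisible by \<open>e\<^bsub>|Z|\<^esub>(Z) = \<Prod>Z\<close>, either
  through the part \<open>|Z|\<close> of \<open>\<sigma>\<close> or through the part \<open>|X| + |Z|\<close> of \<open>\<mu>\<close>, and this factor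
  is cancelled.\<close>

lemma box_relation_cancel_esym_card_Z:
  assumes rel: "box_relation X Z S c" and fin: "finite X" "finite Z" and disj: "X \<inter> Z = {}"
    and low: "\<And>\<sigma> \<mu>. (\<sigma>, \<mu>) \<in> S \<Longrightarrow> \<sigma> \<in> Box (card X) (card Z - 1) \<Longrightarrow>
                \<mu> \<in> Par (card X + card Z - 1) \<Longrightarrow> c \<sigma> \<mu> = 0"
  shows "(\<Sum>(\<sigma>, \<mu>)\<in>{(\<sigma>, \<mu>)\<in>S. \<sigma> \<notin> Box (card X) (card Z - 1)}.
            of_int (c \<sigma> \<mu>) * (esym_seq Z (tl \<sigma>) * esym_seq (X \<union> Z) \<mu>)) +
         esym X (card X) *
         (\<Sum>(\<sigma>, \<mu>)\<in>{(\<sigma>, \<mu>)\<in>S. \<sigma> \<in> Box (card X) (card Z - 1) \<and> \<mu> \<notin> Par (card X + card Z - 1)}.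
            of_int (c \<sigma> \<mu>) * (esym_seq Z \<sigma> * esym_seq (X \<union> Z) (tl \<mu>))) = 0"
    (is "?SA + esym X ?k * ?SB = 0")
proof -
  let ?m = "card Z" and ?Y = "X \<union> Z"
  let ?A = "{(\<sigma>, \<mu>)\<in>S. \<sigma> \<notin> Box ?k (?m - 1)}"
  let ?B = "{(\<sigma>, \<mu>)\<in>S. \<sigma> \<in> Box ?k (?m - 1) \<and> \<mu> \<notin> Par (?k + ?m - 1)}"
  let ?f = "\<lambda>\<sigma> \<mu>. of_int (c \<sigma> \<mu>) * (esym_seq Z \<sigma> * esym_seq ?Y \<mu>)"
  have fS: "finite S" and sub: "S \<subseteq> Box ?k ?m \<times> Par (?k + ?m)"
    and sum0: "(\<Sum>(\<sigma>, \<mu>)\<in>S. ?f \<sigma> \<mu>) = 0"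
    using rel by (auto simp: box_relation_def)
  have "(\<Sum>(\<sigma>, \<mu>)\<in>S. ?f \<sigma> \<mu>) = (\<Sum>(\<sigma>, \<mu>)\<in>S \<inter> (?A \<union> ?B). ?f \<sigma> \<mu>)"
    by (rule sum_pairs_restrict[OF fS]) (use low in auto)
  also have "S \<inter> (?A \<union> ?B) = ?A \<union> ?B"
    by auto
  also have "(\<Sum>(\<sigma>, \<mu>)\<in>?A \<union> ?B. ?f \<sigma> \<mu>) = (\<Sum>(\<sigma>, \<mu>)\<in>?A. ?f \<sigma> \<mu>) + (\<Sum>(\<sigma>, \<mu>)\<in>?B. ?f \<sigma> \<mu>)"
    by (rule sum.union_disjoint) (auto intro: rev_finite_subset[OF fS])
  also have "(\<Sum>(\<sigma>, \<mu>)\<in>?A. ?f \<sigma> \<mu>) = esym Z ?m * ?SA"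
    unfolding sum_distrib_left
    by (rule sum.cong[OF refl]) (use sub in \<open>auto simp: esym_seq_Box_top ac_simps\<close>)
  also have "(\<Sum>(\<sigma>, \<mu>)\<in>?B. ?f \<sigma> \<mu>) = esym Z ?m * (esym X ?k * ?SB)"
    unfolding sum_distrib_left
    by (rule sum.cong[OF refl])
       (use sub in \<open>auto simp: esym_seq_Par_top esym_card_Un[OF fin disj] ac_simps\<close>)
  finally have "esym Z ?m * (?SA + esym X ?k * ?SB) = 0"
    using sum0 by (simp add: distrib_left)
  then show ?thesis
    using esym_card_neq_0[OF fin(2)] by simp
qed

lemma box_relation_subst_zero_top:
  assumes rel: "box_relation X Z S c" and fin: "finite X" "finite Z" and disj: "X \<inter> Z = {}"
    and x: "x \<in> X"
    and low: "\<And>\<sigma> \<mu>. (\<sigma>, \<mu>) \<in> S \<Longrightarrow> \<sigma> \<in> Box (card X) (card Z - 1) \<Longrightarrow>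
                \<mu> \<in> Par (card X + card Z - 1) \<Longrightarrow> c \<sigma> \<mu> = 0"
  shows "(\<Sum>(\<sigma>, \<mu>)\<in>{(\<sigma>, \<mu>)\<in>S. \<sigma> \<notin> Box (card X) (card Z - 1) \<and> \<mu> \<in> Par (card X + card Z - 1)}.
            of_int (c \<sigma> \<mu>) * (esym_seq Z (tl \<sigma>) * esym_seq (X - {x} \<union> Z) \<mu>)) = 0"
proof -
  let ?k = "card X" and ?m = "card Z" and ?X = "X - {x}"
  let ?f = "\<lambda>\<sigma> \<mu>. of_int (c \<sigma> \<mu>) * (esym_seq Z (tl \<sigma>) * esym_seq (?X \<union> Z) \<mu>)"
  let ?A = "{(\<sigma>, \<mu>)\<in>S. \<sigma> \<notin> Box ?k (?m - 1)}"
  have fS: "finite S" and sub: "S \<subseteq> Box ?k ?m \<times> Par (?k + ?m)"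
    using rel by (auto simp: box_relation_def)
  have "Z - {x} = Z"
    using x disj by auto
  note card_drop = card_Diff_singleton_disjoint_Un[OF fin disj, of x, unfolded \<open>Z - {x} = Z\<close>]
  have "subst_zero x (esym X ?k) = 0"
    using card_drop x fin by (simp add: subst_zero_esym esym_eq_0)
  moreover have "subst_zero x (esym_seq (X \<union> Z) p) = esym_seq (?X \<union> Z) p" for p
    using \<open>Z - {x} = Z\<close> fin by (simp add: subst_zero_esym_seq Un_Diff)
  ultimately have "(\<Sum>(\<sigma>, \<mu>)\<in>?A. ?f \<sigma> \<mu>) = 0"
    using arg_cong[OF box_relation_cancel_esym_card_Z[OF rel fin disj low], of "subst_zero x"]
      \<open>Z - {x} = Z\<close> fin
    by (simp add: subst_zero_sum subst_zero_mult subst_zero_add subst_zero_esym_seq case_prod_beta)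
  also have "(\<Sum>(\<sigma>, \<mu>)\<in>?A. ?f \<sigma> \<mu>) = (\<Sum>(\<sigma>, \<mu>)\<in>?A \<inter> (UNIV \<times> Par (?k + ?m - 1)). ?f \<sigma> \<mu>)"
  proof (rule sum_pairs_restrict)
    fix \<sigma> \<mu> assume "(\<sigma>, \<mu>) \<in> ?A" "(\<sigma>, \<mu>) \<notin> UNIV \<times> Par (?k + ?m - 1)"
    then have "esym_seq (?X \<union> Z) \<mu> = 0"
      using sub fin card_drop x by (intro esym_seq_Par_top_eq_0[of \<mu> "?k + ?m"]) auto
    then show "?f \<sigma> \<mu> = 0"
      by simp
  qed (auto intro: rev_finite_subset[OF fS])
  also have "?A \<inter> (UNIV \<times> Par (?k + ?m - 1)) =
      {(\<sigma>, \<mu>)\<in>S. \<sigma> \<notin> Box ?k (?m - 1) \<and> \<mu> \<in> Par (?k + ?m - 1)}"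
    by auto
  finally show ?thesis .
qed

lemma box_relation_strip_top_sigma:
  assumes rel: "box_relation X Z S c" and fin: "finite X" "finite Z" and disj: "X \<inter> Z = {}"
    and x: "x \<in> X"
    and low: "\<And>\<sigma> \<mu>. (\<sigma>, \<mu>) \<in> S \<Longrightarrow> \<sigma> \<in> Box (card X) (card Z - 1) \<Longrightarrow>
                \<mu> \<in> Par (card X + card Z - 1) \<Longrightarrow> c \<sigma> \<mu> = 0"
  shows "box_relation (X - {x}) Z {(\<sigma>, \<mu>). (card Z # \<sigma>, \<mu>) \<in> S \<and> \<mu> \<in> Par (card X + card Z - 1)}
           (\<lambda>\<sigma> \<mu>. c (card Z # \<sigma>) \<mu>)"
proof -
  let ?k = "card X" and ?m = "card Z" and ?X = "X - {x}"
  let ?S = "{(\<sigma>, \<mu>)\<in>S. \<sigma> \<notin> Box ?k (?m - 1) \<and> \<mu> \<in> Par (?k + ?m - 1)}"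
  define h where "h = (\<lambda>(\<sigma>, \<mu>::nat list). (?m # \<sigma>, \<mu>))"
  have fS: "finite S" and sub: "S \<subseteq> Box ?k ?m \<times> Par (?k + ?m)"
    using rel by (auto simp: box_relation_def)
  have card_X: "card ?X = ?k - 1" "0 < ?k"
    using x fin by (auto simp: card_gt_0_iff)
  have top: "\<sigma> = ?m # tl \<sigma> \<and> tl \<sigma> \<in> Box (?k - 1) ?m" if "(\<sigma>, \<mu>) \<in> ?S" for \<sigma> \<mu>
    using that sub Box_top by blast
  have "?m # \<sigma> \<notin> Box ?k (?m - 1)" for \<sigma>
    by (auto simp: Box_def is_partition_Cons)
  then have vimage: "h -` ?S = {(\<sigma>, \<mu>). (?m # \<sigma>, \<mu>) \<in> S \<and> \<mu> \<in> Par (?k + ?m - 1)}"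
    by (auto simp: h_def)
  have inj: "inj h"
    by (auto simp: h_def inj_def)
  have range: "?S \<subseteq> range h"
    using top unfolding h_def by (auto simp: image_def)
  have "box_relation ?X Z (h -` ?S) (\<lambda>\<sigma> \<mu>. c (?m # \<sigma>) \<mu>)"
    unfolding box_relation_def
  proof (intro conjI)
    show "finite (h -` ?S)"
      by (rule finite_vimageI[OF _ inj]) (auto intro: rev_finite_subset[OF fS])
    show "h -` ?S \<subseteq> Box (card ?X) ?m \<times> Par (card ?X + ?m)"
      using top card_X by (fastforce simp: h_def)
    show "(\<Sum>(\<sigma>, \<mu>)\<in>h -` ?S. of_int (c (?m # \<sigma>) \<mu>) * (esym_seq Z \<sigma> * esym_seq (?X \<union> Z) \<mu>)) = 0"
      using sum_vimage_inj[OF inj range,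
          of "\<lambda>(\<sigma>, \<mu>). of_int (c \<sigma> \<mu>) * (esym_seq Z (tl \<sigma>) * esym_seq (?X \<union> Z) \<mu>)"]
        box_relation_subst_zero_top[OF rel fin disj x low]
      by (simp add: h_def case_prod_beta)
  qed
  then show ?thesis
    unfolding vimage .
qed

lemma box_relation_cancel_esym_card_Un:
  assumes rel: "box_relation X Z S c" and fin: "finite X" "finite Z" and disj: "X \<inter> Z = {}"
    and low: "\<And>\<sigma> \<mu>. (\<sigma>, \<mu>) \<in> S \<Longrightarrow> \<mu> \<in> Par (card X + card Z - 1) \<Longrightarrow> c \<sigma> \<mu> = 0"
  shows "(\<Sum>(\<sigma>, \<mu>)\<in>{(\<sigma>, \<mu>)\<in>S. \<mu> \<notin> Par (card X + card Z - 1)}.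
            of_int (c \<sigma> \<mu>) * (esym_seq Z \<sigma> * esym_seq (X \<union> Z) (tl \<mu>))) = 0"
    (is "?ST = 0")
proof -
  let ?a = "card X + card Z" and ?Y = "X \<union> Z"
  let ?S = "{(\<sigma>, \<mu>)\<in>S. \<mu> \<notin> Par (?a - 1)}"
  let ?f = "\<lambda>\<sigma> \<mu>. of_int (c \<sigma> \<mu>) * (esym_seq Z \<sigma> * esym_seq ?Y \<mu>)"
  have fS: "finite S" and sub: "S \<subseteq> Box (card X) (card Z) \<times> Par ?a"
    and sum0: "(\<Sum>(\<sigma>, \<mu>)\<in>S. ?f \<sigma> \<mu>) = 0"
    using rel by (auto simp: box_relation_def)
  have "(\<Sum>(\<sigma>, \<mu>)\<in>S. ?f \<sigma> \<mu>) = (\<Sum>(\<sigma>, \<mu>)\<in>S \<inter> ?S. ?f \<sigma> \<mu>)"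
    by (rule sum_pairs_restrict[OF fS]) (use low in auto)
  also have "S \<inter> ?S = ?S"
    by auto
  also have "(\<Sum>(\<sigma>, \<mu>)\<in>?S. ?f \<sigma> \<mu>) = esym ?Y ?a * ?ST"
    unfolding sum_distrib_left
    by (rule sum.cong[OF refl]) (use sub in \<open>auto simp: esym_seq_Par_top ac_simps\<close>)
  finally show ?thesis
    using sum0 esym_card_neq_0[of ?Y] fin disj by (simp add: card_Un_disjoint)
qed

lemma box_relation_strip_top_part:
  assumes rel: "box_relation X Z S c" and fin: "finite X" "finite Z" and disj: "X \<inter> Z = {}"
    and low: "\<And>\<sigma> \<mu>. (\<sigma>, \<mu>) \<in> S \<Longrightarrow> \<mu> \<in> Par (card X + card Z - 1) \<Longrightarrow> c \<sigma> \<mu> = 0"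
  shows "box_relation X Z {(\<sigma>, \<mu>). (\<sigma>, (card X + card Z) # \<mu>) \<in> S}
           (\<lambda>\<sigma> \<mu>. c \<sigma> ((card X + card Z) # \<mu>))"
proof -
  let ?a = "card X + card Z" and ?Y = "X \<union> Z"
  let ?S = "{(\<sigma>, \<mu>)\<in>S. \<mu> \<notin> Par (?a - 1)}"
  define h where "h = (\<lambda>(\<sigma>::nat list, \<mu>). (\<sigma>, ?a # \<mu>))"
  have fS: "finite S" and sub: "S \<subseteq> Box (card X) (card Z) \<times> Par ?a"
    using rel by (auto simp: box_relation_def)
  have top: "\<mu> = ?a # tl \<mu> \<and> tl \<mu> \<in> Par ?a" if "(\<sigma>, \<mu>) \<in> ?S" for \<sigma> \<mu>
    using that sub Par_top by blast
  have "?a # \<mu> \<notin> Par (?a - 1)" for \<mu>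
    by (auto simp: Par_def is_partition_Cons)
  then have vimage: "h -` ?S = {(\<sigma>, \<mu>). (\<sigma>, ?a # \<mu>) \<in> S}"
    by (auto simp: h_def)
  have inj: "inj h"
    by (auto simp: h_def inj_def)
  have range: "?S \<subseteq> range h"
    using top unfolding h_def by (auto simp: image_def)
  have "box_relation X Z (h -` ?S) (\<lambda>\<sigma> \<mu>. c \<sigma> (?a # \<mu>))"
    unfolding box_relation_def
  proof (intro conjI)
    show "finite (h -` ?S)"
      by (rule finite_vimageI[OF _ inj]) (auto intro: rev_finite_subset[OF fS])
    show "h -` ?S \<subseteq> Box (card X) (card Z) \<times> Par ?a"
      using top sub by (fastforce simp: h_def)
    show "(\<Sum>(\<sigma>, \<mu>)\<in>h -` ?S. of_int (c \<sigma> (?a # \<mu>)) * (esym_seq Z \<sigma> * esym_seq ?Y \<mu>)) = 0"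
      using sum_vimage_inj[OF inj range,
          of "\<lambda>(\<sigma>, \<mu>). of_int (c \<sigma> \<mu>) * (esym_seq Z \<sigma> * esym_seq ?Y (tl \<mu>))"]
        box_relation_cancel_esym_card_Un[OF rel fin disj low]
      by (simp add: h_def case_prod_beta)
  qed
  then show ?thesis
    unfolding vimage .
qed

lemma box_relation_coeff_eq_0_inner_box:
  assumes rel: "box_relation X Z S c" and fin: "finite X" "finite Z" and disj: "X \<inter> Z = {}"
    and z: "z \<in> Z" and indep: "box_independent X (Z - {z})"
    and p: "(\<sigma>, \<mu>) \<in> S" "\<sigma> \<in> Box (card X) (card Z - 1)" "\<mu> \<in> Par (card X + card Z - 1)"
  shows "c \<sigma> \<mu> = 0"
proof -
  let ?k = "card X" and ?m = "card Z"
  have "X - {z} = X" "card (Z - {z}) = ?m - 1" "card (Z - {z}) < ?m"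
    using z disj fin card_Diff1_less[OF fin(2) z] by auto
  moreover have "box_relation (X - {z}) (Z - {z})
      (S \<inter> (Box (card (X - {z})) (card (Z - {z})) \<times> Par (?k + ?m - 1))) c"
  proof (rule box_relation_drop_var[OF rel fin disj])
    fix \<sigma>' \<mu>' assume "(\<sigma>', \<mu>') \<in> S" "\<sigma>' \<notin> Box (card (X - {z})) (card (Z - {z}))"
    then show "esym_seq (Z - {z}) \<sigma>' = 0"
      using rel fin \<open>X - {z} = X\<close> \<open>card (Z - {z}) = ?m - 1\<close> \<open>card (Z - {z}) < ?m\<close>
      by (intro esym_seq_Box_top_eq_0[of \<sigma>' ?k ?m]) (auto simp: box_relation_def)
  qed (use z in blast)
  ultimately show ?thesis
    using box_independentD[OF indep, of _ c \<sigma> \<mu>] p by simp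
qed

lemma box_relation_coeff_eq_0_degenerate:
  assumes rel: "box_relation X Z S c" and fin: "finite X" "finite Z" and disj: "X \<inter> Z = {}"
    and degenerate: "X = {} \<or> Z = {}"
    and indep: "\<And>v. v \<in> X \<union> Z \<Longrightarrow> box_independent (X - {v}) (Z - {v})"
    and p: "(\<sigma>, \<mu>) \<in> S" "\<mu> \<in> Par (card X + card Z - 1)"
  shows "c \<sigma> \<mu> = 0"
proof -
  let ?k = "card X" and ?m = "card Z"
  have sub: "S \<subseteq> Box ?k ?m \<times> Par (?k + ?m)"
    and sum0: "(\<Sum>(\<sigma>, \<mu>)\<in>S. of_int (c \<sigma> \<mu>) * (esym_seq Z \<sigma> * esym_seq (X \<union> Z) \<mu>)) = 0"
    using rel by (auto simp: box_relation_def)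
  have Box: "Box ?k ?m = {[]}"
    using degenerate fin by (simp add: Box_degenerate)
  show ?thesis
  proof (cases "X \<union> Z = {}")
    case True
    then have "S = {([], [])}"
      using sub fin p Box by (auto simp: Par_0)
    then show ?thesis
      using sum0 p by simp
  next
    case False
    then obtain v where v: "v \<in> X \<union> Z"
      by blast
    have "box_relation (X - {v}) (Z - {v})
        (S \<inter> (Box (card (X - {v})) (card (Z - {v})) \<times> Par (?k + ?m - 1))) c"
    proof (rule box_relation_drop_var[OF rel fin disj v])
      fix \<sigma>' \<mu>' assume "(\<sigma>', \<mu>') \<in> S" "\<sigma>' \<notin> Box (card (X - {v})) (card (Z - {v}))"
      moreover have "\<sigma>' \<in> Box ?k ?m"
        using \<open>(\<sigma>', \<mu>') \<in> S\<close> sub by blast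
      ultimately show "esym_seq (Z - {v}) \<sigma>' = 0"
        using Box by simp
    qed
    moreover have "\<sigma> = []"
      using p sub Box by auto
    ultimately show ?thesis
      using box_independentD[OF indep[OF v]] p by simp
  qed
qed

lemma box_relation_coeff_eq_0_below_top:
  assumes rel: "box_relation X Z S c" and fin: "finite X" "finite Z" and disj: "X \<inter> Z = {}"
    and IH: "\<And>X' Z'. finite X' \<Longrightarrow> finite Z' \<Longrightarrow> X' \<inter> Z' = {} \<Longrightarrow>
               card X' + card Z' < card X + card Z \<Longrightarrow> box_independent X' Z'"
    and p: "(\<sigma>, \<mu>) \<in> S" "\<mu> \<in> Par (card X + card Z - 1)"
  shows "c \<sigma> \<mu> = 0"
proof -
  let ?k = "card X" and ?m = "card Z"
  have indep: "box_independent (X - {v}) (Z - {v})" if "v \<in> X \<union> Z" for v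
    using card_Diff_singleton_disjoint_Un[OF fin disj that] fin disj by (intro IH) auto
  show ?thesis
  proof (cases "X = {} \<or> Z = {}")
    case True
    then show ?thesis
      by (rule box_relation_coeff_eq_0_degenerate[OF rel fin disj _ indep p])
  next
    case False
    then obtain x z where x: "x \<in> X" and z: "z \<in> Z"
      by blast
    have "X - {z} = X" "Z - {x} = Z"
      using x z disj by auto
    then have indep_x: "box_independent (X - {x}) Z" and indep_z: "box_independent X (Z - {z})"
      using indep[of x] indep[of z] x z by auto
    note low = box_relation_coeff_eq_0_inner_box[OF rel fin disj z indep_z]
    show ?thesis
    proof (cases "\<sigma> \<in> Box ?k (?m - 1)")
      case True
      then show ?thesis
        using low p by blast
    next
      case False
      moreover have "\<sigma> \<in> Box ?k ?m"
        using p rel by (auto simp: box_relation_def)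
      ultimately obtain \<sigma>' where \<sigma>': "\<sigma> = ?m # \<sigma>'"
        using Box_top by blast
      have "c (?m # \<sigma>') \<mu> = 0"
        using box_independentD[OF indep_x box_relation_strip_top_sigma[OF rel fin disj x low], of \<sigma>' \<mu>]
          p \<sigma>' by simp
      then show ?thesis
        using \<sigma>' by simp
    qed
  qed
qed

lemma box_relation_coeff_eq_0_bounded_length:
  assumes fin: "finite X" "finite Z" and disj: "X \<inter> Z = {}"
    and IH: "\<And>X' Z'. finite X' \<Longrightarrow> finite Z' \<Longrightarrow> X' \<inter> Z' = {} \<Longrightarrow>
               card X' + card Z' < card X + card Z \<Longrightarrow> box_independent X' Z'"
  shows "box_relation X Z S c \<Longrightarrow> \<forall>(\<sigma>, \<mu>)\<in>S. length \<mu> \<le> n \<Longrightarrow> (\<sigma>, \<mu>) \<in> S \<Longrightarrow>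
           c \<sigma> \<mu> = 0"
proof (induction n arbitrary: S c \<sigma> \<mu>)
  case 0
  then have "\<mu> \<in> Par (card X + card Z - 1)"
    by (auto simp: Par_def is_partition_def)
  then show ?case
    using box_relation_coeff_eq_0_below_top[OF 0(1) fin disj IH 0(3)] by blast
next
  case (Suc n)
  let ?a = "card X + card Z"
  note low = box_relation_coeff_eq_0_below_top[OF Suc.prems(1) fin disj IH]
  show ?case
  proof (cases "\<mu> \<in> Par (?a - 1)")
    case True
    then show ?thesis
      using low Suc.prems(3) by blast
  next
    case False
    then obtain \<mu>' where \<mu>': "\<mu> = ?a # \<mu>'"
      using Suc.prems(1,3) Par_top by (auto simp: box_relation_def)
    have "c \<sigma> (?a # \<mu>') = 0"
    proof (rule Suc.IH[OF box_relation_strip_top_part[OF Suc.prems(1) fin disj low]])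
      show "\<forall>(\<sigma>', \<mu>')\<in>{(\<sigma>', \<mu>'). (\<sigma>', ?a # \<mu>') \<in> S}. length \<mu>' \<le> n"
        using Suc.prems(2) by fastforce
      show "(\<sigma>, \<mu>') \<in> {(\<sigma>', \<mu>'). (\<sigma>', ?a # \<mu>') \<in> S}"
        using Suc.prems(3) \<mu>' by simp
    qed
    then show ?thesis
      using \<mu>' by simp
  qed
qed

theorem box_independent:
  "finite X \<Longrightarrow> finite Z \<Longrightarrow> X \<inter> Z = {} \<Longrightarrow> box_independent X Z"
proof (induction "card X + card Z" arbitrary: X Z rule: less_induct)
  case less
  show ?case
    unfolding box_independent_def
  proof (intro allI impI ballI, clarify)
    fix S c \<sigma> \<mu> assume rel: "box_relation X Z S c" and p: "(\<sigma>, \<mu>) \<in> S"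
    obtain n where "\<forall>(\<sigma>, \<mu>)\<in>S. length \<mu> \<le> n"
      using rel finite_nat_set_iff_bounded_le[of "length ` snd ` S"]
      by (fastforce simp: box_relation_def)
    then show "c \<sigma> \<mu> = 0"
      using box_relation_coeff_eq_0_bounded_length[OF less.prems less.hyps rel _ p] by blast
  qed
qed


section \<open>Strict partitions and their shifts\<close>

lemma SPar_nth_gap:
  assumes "lam \<in> SPar a k" "i + d < k"
  shows "lam ! (i + d) + d \<le> lam ! i"
  using assms(2)
proof (induction d)
  case (Suc d)
  have "sorted_wrt (>) lam" "length lam = k"
    using assms(1) by (auto simp: SPar_def)
  then have "lam ! (i + Suc d) < lam ! (i + d)"
    using Suc.prems by (auto simp: sorted_wrt_iff_nth_less)
  then show ?case
    using Suc by simp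
qed simp

lemma SPar_nth_lower:
  assumes "lam \<in> SPar a k" "i < k"
  shows "k - i \<le> lam ! i"
proof -
  have "length lam = k" "\<forall>x\<in>set lam. 1 \<le> x"
    using assms(1) by (auto simp: SPar_def)
  then have "1 \<le> lam ! (i + (k - 1 - i))"
    using assms(2) by simp
  then show ?thesis
    using SPar_nth_gap[OF assms(1), of i "k - 1 - i"] assms(2) by simp
qed

lemma SPar_nth_upper:
  assumes "lam \<in> SPar a k" "i < k"
  shows "lam ! i + i \<le> a"
proof -
  have "lam ! 0 \<le> a"
    using assms by (auto simp: SPar_def)
  then show ?thesis
    using SPar_nth_gap[OF assms(1), of 0 i] assms(2) by simp
qed

lemma length_shifted [simp]: "length (shifted lam) = length lam"
  by (simp add: shifted_def)

lemma nth_shifted: "i < length lam \<Longrightarrow> shifted lam ! i = lam ! i - (length lam - i)"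
  by (simp add: shifted_def)

lemma sorted_shifted:
  assumes "lam \<in> SPar a k"
  shows "sorted_wrt (\<ge>) (shifted lam)"
  unfolding sorted_wrt_iff_nth_less
proof (intro allI impI)
  fix i j assume ij: "i < j" "j < length (shifted lam)"
  have k: "length lam = k"
    using assms by (simp add: SPar_def)
  have "lam ! (i + (j - i)) + (j - i) \<le> lam ! i"
    using SPar_nth_gap[OF assms, of i "j - i"] ij k by simp
  then show "shifted lam ! j \<le> shifted lam ! i"
    using ij k SPar_nth_lower[OF assms, of j] by (simp add: nth_shifted)
qed

lemma shifted_le:
  assumes "lam \<in> SPar a k" "x \<in> set (shifted lam)"
  shows "x \<le> a - k"
proof -
  have k: "length lam = k"
    using assms(1) by (simp add: SPar_def)
  then obtain i where i: "i < k" "x = shifted lam ! i"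
    using assms(2) by (auto simp: in_set_conv_nth)
  then have "x = lam ! i + i - k"
    using k by (simp add: nth_shifted)
  then show ?thesis
    using SPar_nth_upper[OF assms(1) i(1)] by simp
qed

definition shifted_partition :: "nat list \<Rightarrow> nat list" where
  "shifted_partition lam = nonzero_parts (shifted lam)"

lemma shifted_partition_in_Box:
  assumes "lam \<in> SPar a k"
  shows "shifted_partition lam \<in> Box k (a - k)"
proof -
  have "length (shifted_partition lam) \<le> k"
    using assms by (auto simp: shifted_partition_def nonzero_parts_def SPar_def intro: order.trans[OF length_filter_le])
  then show ?thesis
    using sorted_shifted[OF assms] shifted_le[OF assms]
    by (auto simp: Box_def is_partition_def shifted_partition_def nonzero_parts_def sorted_wrt_filter)
qed

lemma sorted_desc_nonzero_parts_append:
  "sorted_wrt (\<ge>) (xs :: nat list) \<Longrightarrow>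
     xs = nonzero_parts xs @ replicate (length xs - length (nonzero_parts xs)) 0"
proof (induction xs)
  case (Cons x xs)
  show ?case
  proof (cases "x = 0")
    case True
    then have "\<forall>y\<in>set xs. y = 0"
      using Cons.prems by auto
    then have "nonzero_parts xs = []" "xs = replicate (length xs) 0"
      by (auto simp: nonzero_parts_def filter_empty_conv intro: replicate_eqI)
    then show ?thesis
      using True by (simp add: nonzero_parts_def)
  next
    case False
    have "length (nonzero_parts xs) \<le> length xs"
      by (simp add: nonzero_parts_def)
    then show ?thesis
      using False Cons by (simp add: nonzero_parts_def Suc_diff_le)
  qed
qed (simp add: nonzero_parts_def)

lemma inj_on_shifted_partition: "inj_on shifted_partition (SPar a k)"
proof (rule inj_onI)
  fix l1 l2 assume l1: "l1 \<in> SPar a k" and l2: "l2 \<in> SPar a k"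
    and eq: "shifted_partition l1 = shifted_partition l2"
  have decomp: "shifted l = shifted_partition l @ replicate (k - length (shifted_partition l)) 0"
    if "l \<in> SPar a k" for l
    using sorted_desc_nonzero_parts_append[OF sorted_shifted[OF that]] that
    by (simp add: shifted_partition_def SPar_def)
  have "shifted l1 = shifted l2"
    using decomp[OF l1] decomp[OF l2] eq by simp
  moreover have k: "length l1 = k" "length l2 = k"
    using l1 l2 by (auto simp: SPar_def)
  ultimately have nth_eq: "l1 ! i - (k - i) = l2 ! i - (k - i)" if "i < k" for i
    using that by (metis nth_shifted)
  show "l1 = l2"
  proof (rule nth_equalityI)
    fix i assume "i < length l1"
    then show "l1 ! i = l2 ! i"
      using k nth_eq[of i] SPar_nth_lower[OF l1, of i] SPar_nth_lower[OF l2, of i] by simp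
  qed (simp add: k)
qed

section \<open>Dominance\<close>

lemma prefix_sums_eq_imp_eq:
  fixes p q :: "nat list"
  assumes "\<forall>i. sum_list (take i p) = sum_list (take i q)" "\<forall>x\<in>set p. 0 < x" "\<forall>x\<in>set q. 0 < x"
  shows "p = q"
  using assms
proof (induction p arbitrary: q)
  case Nil
  then show ?case
    by (cases q) (auto dest: spec[of _ 1])
next
  case (Cons x xs)
  then obtain y ys where q: "q = y # ys"
    by (cases q) (auto dest: spec[of _ 1])
  then have "x = y"
    using Cons.prems(1) by (auto dest: spec[of _ 1])
  moreover have "sum_list (take i xs) = sum_list (take i ys)" for i
    using Cons.prems(1) q \<open>x = y\<close> by (auto dest: spec[of _ "Suc i"])
  ultimately show ?case
    using Cons q by simp
qed

lemma nonzero_parts_partition: "is_partition \<nu> \<Longrightarrow> nonzero_parts \<nu> = \<nu>"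
  by (auto simp: is_partition_def nonzero_parts_def intro: filter_True)

lemma sum_list_nonzero_parts: "sum_list (nonzero_parts p) = sum_list (p :: nat list)"
  by (induction p) (auto simp: nonzero_parts_def)

lemma strictly_dominates_length_le:
  assumes "is_partition \<nu>" "strictly_dominates \<nu> \<rho>"
  shows "length \<nu> \<le> length (nonzero_parts \<rho>)"
proof -
  let ?q = "nonzero_parts \<rho>"
  have "sum_list ?q \<le> sum_list (take (length ?q) \<nu>)"
    using assms by (auto simp: strictly_dominates_def nonzero_parts_partition dest: spec[of _ "length ?q"])
  moreover have "sum_list \<nu> = sum_list ?q"
    using assms(2) by (simp add: strictly_dominates_def sum_list_nonzero_parts)
  moreover have "sum_list \<nu> = sum_list (take (length ?q) \<nu>) + sum_list (drop (length ?q) \<nu>)"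
    by (metis append_take_drop_id sum_list_append)
  ultimately have "sum_list (drop (length ?q) \<nu>) = 0"
    by linarith
  then have "\<forall>x\<in>set (drop (length ?q) \<nu>). x = 0"
    by simp
  moreover have "\<forall>x\<in>set (drop (length ?q) \<nu>). 0 < x"
    using assms(1) by (auto simp: is_partition_def dest: in_set_dropD)
  ultimately have "set (drop (length ?q) \<nu>) = {}"
    by (intro equals0I) force
  then show ?thesis
    by simp
qed

definition dominance_potential :: "nat \<Rightarrow> nat list \<Rightarrow> nat" where
  "dominance_potential K p = (\<Sum>i\<le>K. sum_list (take i p))"

lemma strictly_dominates_potential_less:
  assumes "is_partition \<nu>" "strictly_dominates \<nu> \<rho>" "length (nonzero_parts \<rho>) \<le> K"
  shows "dominance_potential K (nonzero_parts \<rho>) < dominance_potential K \<nu>"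
  unfolding dominance_potential_def
proof (rule sum_strict_mono_ex1)
  let ?q = "nonzero_parts \<rho>"
  have ge: "sum_list (take i ?q) \<le> sum_list (take i \<nu>)" for i
    using assms(1,2) by (simp add: strictly_dominates_def nonzero_parts_partition)
  then show "\<forall>i\<in>{..K}. sum_list (take i ?q) \<le> sum_list (take i \<nu>)"
    by blast
  show "\<exists>i\<in>{..K}. sum_list (take i ?q) < sum_list (take i \<nu>)"
  proof (rule ccontr)
    assume no_gap: "\<not> ?thesis"
    have eq_K: "sum_list (take i \<nu>) = sum_list (take i ?q)" if "i \<le> K" for i
      using ge[of i] that no_gap by (meson antisym atMost_iff not_less)
    have "length \<nu> \<le> K"
      using strictly_dominates_length_le[OF assms(1,2)] assms(3) by simp
    then have "sum_list (take i \<nu>) = sum_list (take i ?q)" for i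
      using eq_K[of i] eq_K[of K] assms(3) by (cases "i \<le> K") auto
    then have "\<nu> = ?q"
      using assms(1) by (intro prefix_sums_eq_imp_eq) (auto simp: is_partition_def nonzero_parts_def)
    then show False
      using assms(1,2) by (simp add: strictly_dominates_def nonzero_parts_partition)
  qed
qed simp

section \<open>Unitriangularity of the expansion\<close>

lemma finite_pairs_fiber: "finite S \<Longrightarrow> finite {i. (i, \<mu>) \<in> S}"
  using finite_vimageI[of S "\<lambda>i. (i, \<mu>)"] by (simp add: inj_def vimage_def)

lemma sum_pairs_group_snd:
  assumes "finite S"
  shows "(\<Sum>(i, \<mu>)\<in>S. F i \<mu>) = (\<Sum>\<mu>\<in>snd ` S. \<Sum>i\<in>{i. (i, \<mu>) \<in> S}. F i \<mu>)"
proof -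
  have "(\<Sum>i\<in>{i. (i, \<mu>) \<in> S}. F i \<mu>) = (\<Sum>p\<in>{p\<in>S. snd p = \<mu>}. case_prod F p)" for \<mu>
    by (rule sum.reindex_bij_witness[of _ fst "\<lambda>i. (i, \<mu>)"]) auto
  then show ?thesis
    using sum.group[where g = snd and h = "case_prod F" and T = "snd ` S"] assms by simp
qed

lemma sum_pairs_regroup:
  fixes c :: "'i \<Rightarrow> 'j \<Rightarrow> int" and G :: "'i \<Rightarrow> 'a::comm_ring_1"
  assumes fin: "finite S"
    and expand: "\<And>i \<mu>. (i, \<mu>) \<in> S \<Longrightarrow> G i = (\<Sum>\<tau>\<in>B. of_int (M i \<tau>) * E \<tau>)"
  shows "(\<Sum>(i, \<mu>)\<in>S. of_int (c i \<mu>) * (G i * H \<mu>)) =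
         (\<Sum>(\<tau>, \<mu>)\<in>B \<times> snd ` S.
            of_int (\<Sum>i\<in>{i. (i, \<mu>) \<in> S}. c i \<mu> * M i \<tau>) * (E \<tau> * H \<mu>))"
proof -
  have "(\<Sum>i\<in>{i. (i, \<mu>) \<in> S}. of_int (c i \<mu>) * (G i * H \<mu>)) =
      (\<Sum>\<tau>\<in>B. of_int (\<Sum>i\<in>{i. (i, \<mu>) \<in> S}. c i \<mu> * M i \<tau>) * (E \<tau> * H \<mu>))" for \<mu>
  proof -
    have "(\<Sum>i\<in>{i. (i, \<mu>) \<in> S}. of_int (c i \<mu>) * (G i * H \<mu>)) =
        (\<Sum>i\<in>{i. (i, \<mu>) \<in> S}. \<Sum>\<tau>\<in>B. of_int (c i \<mu> * M i \<tau>) * (E \<tau> * H \<mu>))"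
      by (rule sum.cong) (simp_all add: expand sum_distrib_left sum_distrib_right ac_simps)
    also have "\<dots> = (\<Sum>\<tau>\<in>B. \<Sum>i\<in>{i. (i, \<mu>) \<in> S}. of_int (c i \<mu> * M i \<tau>) * (E \<tau> * H \<mu>))"
      by (rule sum.swap)
    finally show ?thesis
      by (simp add: sum_distrib_right)
  qed
  then show ?thesis
    by (simp add: sum_pairs_group_snd[OF fin] sum.cartesian_product[symmetric] sum.swap[of _ B])
qed

lemma unitriangular_combination_eq_0:
  fixes c :: "'i \<Rightarrow> 'a::semiring_1" and \<phi> :: "'b \<Rightarrow> nat"
  assumes fin: "finite I" and inj: "inj_on f I"
    and diag: "\<And>i. i \<in> I \<Longrightarrow> M i (f i) = 1"
    and upper: "\<And>i \<tau>. i \<in> I \<Longrightarrow> M i \<tau> \<noteq> 0 \<Longrightarrow> \<tau> \<noteq> f i \<Longrightarrow> \<phi> (f i) < \<phi> \<tau>"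
    and comb: "\<And>i. i \<in> I \<Longrightarrow> (\<Sum>j\<in>I. c j * M j (f i)) = 0"
    and i: "i \<in> I"
  shows "c i = 0"
proof (rule ccontr)
  assume "c i \<noteq> 0"
  then obtain i\<^sub>0 where i\<^sub>0: "i\<^sub>0 \<in> I" "c i\<^sub>0 \<noteq> 0"
    and min: "\<And>j. j \<in> I \<Longrightarrow> c j \<noteq> 0 \<Longrightarrow> \<phi> (f i\<^sub>0) \<le> \<phi> (f j)"
    using ex_has_least_nat[of "\<lambda>j. j \<in> I \<and> c j \<noteq> 0" i "\<lambda>j. \<phi> (f j)"] i by blast
  have "c j * M j (f i\<^sub>0) = 0" if "j \<in> I - {i\<^sub>0}" for j
  proof (rule ccontr)
    assume "c j * M j (f i\<^sub>0) \<noteq> 0"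
    then have "c j \<noteq> 0" "M j (f i\<^sub>0) \<noteq> 0"
      by auto
    moreover have "f i\<^sub>0 \<noteq> f j"
      using inj that i\<^sub>0(1) by (auto dest: inj_onD)
    ultimately have "\<phi> (f j) < \<phi> (f i\<^sub>0)"
      using upper[of j "f i\<^sub>0"] that by auto
    then show False
      using min[of j] that \<open>c j \<noteq> 0\<close> by auto
  qed
  then have "(\<Sum>j\<in>I - {i\<^sub>0}. c j * M j (f i\<^sub>0)) = 0"
    by (intro sum.neutral) blast
  then have "(\<Sum>j\<in>I. c j * M j (f i\<^sub>0)) = c i\<^sub>0"
    by (simp add: sum.remove[OF fin i\<^sub>0(1)] diag[OF i\<^sub>0(1)])
  then show False
    using comb[OF i\<^sub>0(1)] i\<^sub>0(2) by simp
qed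

definition expansion_coeff :: "nat list \<Rightarrow> nat list set \<Rightarrow> (nat list \<Rightarrow> int) \<Rightarrow> nat list \<Rightarrow> int" where
  "expansion_coeff \<tau>\<^sub>0 N d \<tau> = (if \<tau> = \<tau>\<^sub>0 then 1 else 0) + (if \<tau> \<in> N then d \<tau> else 0)"

lemma shifted_partition_potential_less:
  assumes lam: "lam \<in> SPar a k" and "is_partition \<nu>" "strictly_dominates \<nu> (shifted lam)"
  shows "dominance_potential k (shifted_partition lam) < dominance_potential k \<nu>"
  using assms shifted_partition_in_Box[OF lam]
  by (auto simp: shifted_partition_def Box_def intro: strictly_dominates_potential_less)

lemma expansion_coeff_shifted_partition:
  assumes lam: "lam \<in> SPar a k"
    and dom: "\<And>\<nu>. \<nu> \<in> N \<Longrightarrow> is_partition \<nu> \<and> strictly_dominates \<nu> (shifted lam)"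
  shows "expansion_coeff (shifted_partition lam) N d (shifted_partition lam) = 1"
    and "expansion_coeff (shifted_partition lam) N d \<tau> \<noteq> 0 \<Longrightarrow> \<tau> \<noteq> shifted_partition lam \<Longrightarrow>
           dominance_potential k (shifted_partition lam) < dominance_potential k \<tau>"
proof -
  show "expansion_coeff (shifted_partition lam) N d (shifted_partition lam) = 1"
    using shifted_partition_potential_less[OF lam] dom by (auto simp: expansion_coeff_def)
  show "dominance_potential k (shifted_partition lam) < dominance_potential k \<tau>"
    if "expansion_coeff (shifted_partition lam) N d \<tau> \<noteq> 0" "\<tau> \<noteq> shifted_partition lam"
    using that shifted_partition_potential_less[OF lam] dom
    by (auto simp: expansion_coeff_def split: if_splits)
qed

lemma esym_seq_expansion_in_Box:
  assumes lam: "lam \<in> SPar a k" and fin: "finite N"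
    and dom: "\<And>\<nu>. \<nu> \<in> N \<Longrightarrow> is_partition \<nu> \<and> strictly_dominates \<nu> (shifted lam)"
  shows "esym_seq {k+1..a} (shifted lam) + (\<Sum>\<nu>\<in>N. of_int (d \<nu>) * esym_seq {k+1..a} \<nu>) =
         (\<Sum>\<tau>\<in>Box k (a - k).
            of_int (expansion_coeff (shifted_partition lam) N d \<tau>) * esym_seq {k+1..a} \<tau>)"
proof -
  let ?Z = "{k+1..a}" and ?B = "Box k (a - k)" and ?\<tau>\<^sub>0 = "shifted_partition lam"
  have coeff: "of_int (expansion_coeff ?\<tau>\<^sub>0 N d \<tau>) * esym_seq ?Z \<tau> =
      (if \<tau> = ?\<tau>\<^sub>0 then esym_seq ?Z \<tau> else 0) + (if \<tau> \<in> N then of_int (d \<tau>) * esym_seq ?Z \<tau> else 0)"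
    for \<tau>
    by (simp add: expansion_coeff_def distrib_right)
  have "(\<Sum>\<tau>\<in>?B. of_int (expansion_coeff ?\<tau>\<^sub>0 N d \<tau>) * esym_seq ?Z \<tau>) =
      (\<Sum>\<tau>\<in>?B. if \<tau> = ?\<tau>\<^sub>0 then esym_seq ?Z \<tau> else 0) +
      (\<Sum>\<tau>\<in>?B \<inter> N. of_int (d \<tau>) * esym_seq ?Z \<tau>)"
    unfolding coeff by (simp only: sum.distrib sum.inter_restrict[OF finite_Box])
  also have "(\<Sum>\<tau>\<in>?B. if \<tau> = ?\<tau>\<^sub>0 then esym_seq ?Z \<tau> else 0) = esym_seq ?Z (shifted lam)"
    using shifted_partition_in_Box[OF lam] finite_Box
    by (simp add: shifted_partition_def esym_seq_nonzero_parts)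
  also have "(\<Sum>\<tau>\<in>?B \<inter> N. of_int (d \<tau>) * esym_seq ?Z \<tau>) = (\<Sum>\<nu>\<in>N. of_int (d \<nu>) * esym_seq ?Z \<nu>)"
  proof (rule sum.mono_neutral_left[OF fin])
    show "\<forall>\<nu>\<in>N - ?B \<inter> N. of_int (d \<nu>) * esym_seq ?Z \<nu> = 0"
    proof
      fix \<nu> assume \<nu>: "\<nu> \<in> N - ?B \<inter> N"
      have "length \<nu> \<le> k"
        using strictly_dominates_length_le[of \<nu> "shifted lam"] dom \<nu> shifted_partition_in_Box[OF lam]
        by (force simp: Box_def shifted_partition_def)
      then obtain r where "r \<in> set \<nu>" "a - k < r"
        using \<nu> dom[of \<nu>] by (auto simp: Box_def not_le)
      then show "of_int (d \<nu>) * esym_seq ?Z \<nu> = 0"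
        by (simp add: esym_seq_eq_0)
    qed
  qed auto
  finally show ?thesis
    by simp
qed

lemma expansion_coeff_unitriangular:
  fixes c :: "nat list \<Rightarrow> int"
  assumes fin: "finite I" and I: "I \<subseteq> SPar a k"
    and dom: "\<And>lam \<nu>. lam \<in> I \<Longrightarrow> \<nu> \<in> N lam \<Longrightarrow> is_partition \<nu> \<and> strictly_dominates \<nu> (shifted lam)"
    and comb: "\<And>\<tau>. \<tau> \<in> Box k (a - k) \<Longrightarrow>
      (\<Sum>l\<in>I. c l * expansion_coeff (shifted_partition l) (N l) (d l) \<tau>) = 0"
    and lam: "lam \<in> I"
  shows "c lam = 0"
proof (rule unitriangular_combination_eq_0[where f = shifted_partition and \<phi> = "dominance_potential k"
      and M = "\<lambda>l. expansion_coeff (shifted_partition l) (N l) (d l)" and c = c and i = lam])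
  show "inj_on shifted_partition I"
    using inj_on_shifted_partition I by (rule inj_on_subset)
  show "expansion_coeff (shifted_partition l) (N l) (d l) (shifted_partition l) = 1" if "l \<in> I" for l
    using expansion_coeff_shifted_partition(1) I that dom by blast
  show "dominance_potential k (shifted_partition l) < dominance_potential k \<tau>"
    if "l \<in> I" "expansion_coeff (shifted_partition l) (N l) (d l) \<tau> \<noteq> 0" "\<tau> \<noteq> shifted_partition l"
    for l \<tau>
    using expansion_coeff_shifted_partition(2) I that dom by blast
  show "(\<Sum>l\<in>I. c l * expansion_coeff (shifted_partition l) (N l) (d l) (shifted_partition i)) = 0"
    if "i \<in> I" for i
    using comb shifted_partition_in_Box I that by blast
qed (use fin lam in auto)

lemma box_expansion_coeffs_eq_0:
  fixes c :: "'i \<Rightarrow> nat list \<Rightarrow> int"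
  assumes "k \<le> a" and fin: "finite S" and Par: "snd ` S \<subseteq> Par a"
    and expand: "\<And>i \<mu>. (i, \<mu>) \<in> S \<Longrightarrow> G i = (\<Sum>\<tau>\<in>Box k (a - k). of_int (M i \<tau>) * esym_seq {k+1..a} \<tau>)"
    and rel: "(\<Sum>(i, \<mu>)\<in>S. of_int (c i \<mu>) * (G i * esym_seq {1..a} \<mu>)) = 0"
    and "\<tau> \<in> Box k (a - k)" "\<mu> \<in> snd ` S"
  shows "(\<Sum>i\<in>{i. (i, \<mu>) \<in> S}. c i \<mu> * M i \<tau>) = 0"
proof -
  define C where "C \<tau> \<mu> = (\<Sum>i\<in>{i. (i, \<mu>) \<in> S}. c i \<mu> * M i \<tau>)" for \<tau> \<mu>
  have "{1..a} = {1..k} \<union> {k+1..a}"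
    using assms(1) by auto
  then have box_rel: "box_relation {1..k} {k+1..a} (Box k (a - k) \<times> snd ` S) C"
    using rel sum_pairs_regroup[OF fin expand, where c = c and H = "esym_seq {1..a}"] fin Par assms(1)
    by (auto simp: box_relation_def finite_Box C_def)
  show ?thesis
    using box_independentD[OF box_independent box_rel, of \<tau> \<mu>] assms(6,7) unfolding C_def by simp
qed

theorem mainTheorem13:
  fixes a k :: nat
    and g :: "nat list \<Rightarrow> mpoly_int"
    and N :: "nat list \<Rightarrow> nat list set"
    and d :: "nat list \<Rightarrow> nat list \<Rightarrow> int"
  assumes "1 \<le> k" and "k \<le> a"
    and "\<And>lam. lam \<in> SPar a k \<Longrightarrow> finite (N lam)"
    and "\<And>lam \<nu>. lam \<in> SPar a k \<Longrightarrow> \<nu> \<in> N lam \<Longrightarrow>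
           is_partition \<nu> \<and> sum_list \<nu> = sum_list (shifted lam) \<and>
           strictly_dominates \<nu> (shifted lam)"
    and "\<And>lam. lam \<in> SPar a k \<Longrightarrow>
           g lam = esym_seq {k+1..a} (shifted lam)
                   + (\<Sum>\<nu>\<in>N lam. of_int (d lam \<nu>) * esym_seq {k+1..a} \<nu>)"
  shows "\<And>S c. finite S \<Longrightarrow> S \<subseteq> SPar a k \<times> Par a \<Longrightarrow>
           (\<Sum>(lam, \<mu>)\<in>S. of_int (c lam \<mu>) * (g lam * esym_seq {1..a} \<mu>)) = (0 :: mpoly_int) \<Longrightarrow>
           (\<forall>(lam, \<mu>)\<in>S. c lam \<mu> = (0::int))"
proof -
  fix S c
  assume fin: "finite S" and sub: "S \<subseteq> SPar a k \<times> Par a"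
    and rel: "(\<Sum>(lam, \<mu>)\<in>S. of_int (c lam \<mu>) * (g lam * esym_seq {1..a} \<mu>)) = (0 :: mpoly_int)"
  define M where "M lam = expansion_coeff (shifted_partition lam) (N lam) (d lam)" for lam
  have dom: "is_partition \<nu> \<and> strictly_dominates \<nu> (shifted lam)"
    if "lam \<in> SPar a k" "\<nu> \<in> N lam" for lam \<nu>
    using assms(4)[OF that] by blast
  have expand: "g lam = (\<Sum>\<tau>\<in>Box k (a - k). of_int (M lam \<tau>) * esym_seq {k+1..a} \<tau>)"
    if "(lam, \<mu>) \<in> S" for lam \<mu>
  proof -
    have lam: "lam \<in> SPar a k"
      using that sub by blast
    show ?thesis
      unfolding M_def assms(5)[OF lam]
      by (rule esym_seq_expansion_in_Box[OF lam assms(3)[OF lam] dom[OF lam]])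
  qed
  have C0: "(\<Sum>l\<in>{l. (l, \<mu>) \<in> S}. c l \<mu> * M l \<tau>) = 0"
    if "\<tau> \<in> Box k (a - k)" "\<mu> \<in> snd ` S" for \<tau> \<mu>
    using box_expansion_coeffs_eq_0[OF assms(2) fin _ expand rel that] sub by force
  show "\<forall>(lam, \<mu>)\<in>S. c lam \<mu> = 0"
  proof clarify
    fix lam \<mu> assume p: "(lam, \<mu>) \<in> S"
    then have "\<mu> \<in> snd ` S"
      by force
    then show "c lam \<mu> = 0"
      by (intro expansion_coeff_unitriangular[where I = "{l. (l, \<mu>) \<in> S}" and c = "\<lambda>l. c l \<mu>"
          and N = N and d = d and a = a and k = k, folded M_def])
        (use finite_pairs_fiber[OF fin] dom sub p C0 in auto)
  qed
qed

end
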